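(* Let $(s_t^{\mathrm{std}})_{t\ge1}$ be real random variables, let $W\ge1$ be an integer, $\kappa\ge0$, $h_{\mathrm C}>0$, and define for $t\ge1$ $$G_t^{\mathrm{score}}=\max_{1\le m\le\min(W,t)}\sqrt m\,\big(\bar s^{\mathrm{std}}_{t-m+1:t}-\kappa\big)_+,\qquad \bar s^{\mathrm{std}}_{t-m+1:t}=\frac1m\sum_{u=t-m+1}^t s_u^{\mathrm{std}},$$ where $(a)_+=\max(a,0)$. (i) (False alarms.) Suppose that for every $t\le T$, every $m\in\{1,\dots,\min(W,t)\}$ and every $a>0$, $\mathbb P(\sqrt m\,\bar s^{\mathrm{std}}_{t-m+1:t}>a)\le e^{-a^2/2}$. Then $$\mathbb P\Big(\max_{1\le t\le T}G_t^{\mathrm{score}}>h_{\mathrm C}\Big)\le TW\,e^{-h_{\mathrm C}^2/2}.$$ (ii) (Detection.) Suppose that for some time $t$ there is a block $\{t-m_\star+1,\dots,t\}$ of length $m_\star\le\min(W,t)$ and a number $\delta>\kappa$ such that, with $\bar s=\bar s^{\mathrm{std}}_{t-m_\star+1:t}$, one has $\mathbb P(\sqrt{m_\star}(\bar s-\delta)\le-u)\le e^{-u^2/2}$ for every $u>0$. Then for any $\beta\in(0,1)$, if $$m_\star\ge\frac{\big(h_{\mathrm C}+\sqrt{2\log(1/\beta)}\big)^2}{(\delta-\kappa)^2},$$ we have $\mathbb P(G_t^{\mathrm{score}}\le h_{\mathrm C})\le\beta$, i.e. a restart (the event $G^{\mathrm{score}}>h_{\mathrm C}$) occurs within the block with probability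 at least $1-\beta$. In particular, detection occurs within $O\big(h_{\mathrm C}^2/(\delta-\kappa)^2\big)$ samples up to logarithmic factors.
   Context: This is the window-limited CUSUM restart rule: $s_t^{\mathrm{std}}$ is a standardized prequential score (average negative log pre-update predictive likelihood on batch $t$, standardized by running mean and scale), $W$ the maximum window, $\kappa$ a drift allowance and $h_{\mathrm C}$ the restart threshold; a restart is triggered when $G_t^{\mathrm{score}}>h_{\mathrm C}$. *)

theory Defs
  imports "HOL-Probability.Probability"
begin

definition sbar :: "(nat \<Rightarrow> 'a \<Rightarrow> real) \<Rightarrow> nat \<Rightarrow> nat \<Rightarrow> 'a \<Rightarrow> real" where
  "sbar s t m \<omega> = (1 / real m) * (\<Sum>u\<in>{t - m + 1..t}. s u \<omega>)"

definition pos_part :: "real \<Rightarrow> real" where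
  "pos_part a = max a 0"

definition Gscore :: "nat \<Rightarrow> real \<Rightarrow> (nat \<Rightarrow> 'a \<Rightarrow> real) \<Rightarrow> nat \<Rightarrow> 'a \<Rightarrow> real" where
  "Gscore W \<kappa> s t \<omega> =
     Max ((\<lambda>m. sqrt (real m) * pos_part (sbar s t m \<omega> - \<kappa>)) ` {1..min W t})"

end

theory Submission
  imports Defs
begin

text \<open>A false alarm at time \<open>t\<close> forces one of the at most \<open>W\<close> window statistics
  \<open>sqrt m * sbar\<close> above \<open>hC\<close> (the drift allowance \<open>\<kappa> \<ge> 0\<close> only helps), so a union bound
  over the \<open>T * W\<close> pairs \<open>(t, m)\<close> controls the false-alarm probability. Conversely,
  \<open>Gscore\<close> dominates the statistic of the signal window \<open>m\<^sub>\<star>\<close>; if \<open>Gscore \<le> hC\<close> then the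
  standardized window mean falls at least \<open>sqrt m\<^sub>\<star> * (\<delta> - \<kappa>) - hC\<close> below \<open>\<delta>\<close>, and the
  sample-size condition makes this deviation at least \<open>sqrt (2 * ln (1 / \<beta>))\<close>, whose
  sub-Gaussian tail is exactly \<open>\<beta>\<close>.\<close>

lemma borel_measurable_sbar [measurable]:
  assumes [measurable]: "\<And>t. s t \<in> borel_measurable M"
  shows "sbar s t m \<in> borel_measurable M"
  unfolding sbar_def[abs_def] by measurable

lemma window_le_Gscore:
  assumes "m \<in> {1..min W t}"
  shows "sqrt (real m) * (sbar s t m \<omega> - \<kappa>) \<le> Gscore W \<kappa> s t \<omega>"
proof -
  let ?f = "\<lambda>m. sqrt (real m) * pos_part (sbar s t m \<omega> - \<kappa>)"
  have "sqrt (real m) * (sbar s t m \<omega> - \<kappa>) \<le> ?f m"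
    unfolding pos_part_def by (intro mult_left_mono) auto
  also have "\<dots> \<le> Max (?f ` {1..min W t})"
    using assms by (intro Max_ge) auto
  finally show ?thesis
    unfolding Gscore_def .
qed

lemma Gscore_gt_imp_window_gt:
  assumes "hC < Gscore W \<kappa> s t \<omega>" and "0 \<le> hC" "0 \<le> \<kappa>" "1 \<le> W" "1 \<le> t"
  obtains m where "m \<in> {1..min W t}" "hC < sqrt (real m) * sbar s t m \<omega>"
proof -
  let ?f = "\<lambda>m. sqrt (real m) * pos_part (sbar s t m \<omega> - \<kappa>)"
  have "Max (?f ` {1..min W t}) \<in> ?f ` {1..min W t}"
    using assms by (intro Max_in) auto
  then obtain m where m: "m \<in> {1..min W t}" and "Gscore W \<kappa> s t \<omega> = ?f m"
    unfolding Gscore_def by auto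
  with assms have gt: "hC < ?f m"
    by simp
  then have "pos_part (sbar s t m \<omega> - \<kappa>) \<noteq> 0"
    using \<open>0 \<le> hC\<close> by auto
  then have "pos_part (sbar s t m \<omega> - \<kappa>) = sbar s t m \<omega> - \<kappa>"
    unfolding pos_part_def by auto
  with gt have "hC < sqrt (real m) * (sbar s t m \<omega> - \<kappa>)"
    by simp
  also have "\<dots> \<le> sqrt (real m) * sbar s t m \<omega>"
    using \<open>0 \<le> \<kappa>\<close> by (intro mult_left_mono) auto
  finally show thesis
    using m by (intro that)
qed

lemma (in prob_space) prob_UN_le_card_mult:
  assumes "finite I" "A ` I \<subseteq> events" "\<And>i. i \<in> I \<Longrightarrow> prob (A i) \<le> p"
  shows "prob (\<Union>i\<in>I. A i) \<le> real (card I) * p"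
proof -
  have "prob (\<Union>i\<in>I. A i) \<le> (\<Sum>i\<in>I. prob (A i))"
    using assms by (intro finite_measure_subadditive_finite) auto
  also have "\<dots> \<le> (\<Sum>i\<in>I. p)"
    using assms by (intro sum_mono) auto
  finally show ?thesis
    by simp
qed

lemma (in prob_space) Gscore_false_alarm_bound:
  assumes [measurable]: "\<And>t. s t \<in> borel_measurable M"
    and "1 \<le> W" "0 \<le> \<kappa>" "0 \<le> hC" "0 \<le> p"
    and tail: "\<And>t m. t \<in> {1..T} \<Longrightarrow> m \<in> {1..min W t} \<Longrightarrow>
      prob {\<omega>\<in>space M. hC < sqrt (real m) * sbar s t m \<omega>} \<le> p"
  shows "prob {\<omega>\<in>space M. \<exists>t\<in>{1..T}. hC < Gscore W \<kappa> s t \<omega>} \<le> real T * real W * p"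
proof -
  define I where "I = Sigma {1..T} (\<lambda>t. {1..min W t})"
  define A where "A = (\<lambda>(t, m). {\<omega>\<in>space M. hC < sqrt (real m) * sbar s t m \<omega>})"
  have "{\<omega>\<in>space M. \<exists>t\<in>{1..T}. hC < Gscore W \<kappa> s t \<omega>} \<subseteq> (\<Union>i\<in>I. A i)"
  proof clarify
    fix \<omega> t assume "\<omega> \<in> space M" "t \<in> {1..T}" "hC < Gscore W \<kappa> s t \<omega>"
    with assms obtain m where "m \<in> {1..min W t}" "hC < sqrt (real m) * sbar s t m \<omega>"
      by (elim Gscore_gt_imp_window_gt) auto
    with \<open>\<omega> \<in> space M\<close> \<open>t \<in> {1..T}\<close> have "(t, m) \<in> I" "\<omega> \<in> A (t, m)"
      unfolding I_def A_def by auto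
    then show "\<omega> \<in> (\<Union>i\<in>I. A i)"
      by blast
  qed
  moreover have events: "A ` I \<subseteq> events"
    unfolding A_def by auto
  ultimately have "prob {\<omega>\<in>space M. \<exists>t\<in>{1..T}. hC < Gscore W \<kappa> s t \<omega>} \<le> prob (\<Union>i\<in>I. A i)"
    by (intro finite_measure_mono) auto
  also have "\<dots> \<le> real (card I) * p"
    using events tail by (intro prob_UN_le_card_mult) (auto simp: I_def A_def)
  also have "\<dots> \<le> real T * real W * p"
  proof -
    have "card I \<le> card ({1..T} \<times> {1..W})"
      unfolding I_def by (intro card_mono) auto
    then show ?thesis
      using \<open>0 \<le> p\<close> by (intro mult_right_mono) (auto simp flip: of_nat_mult)
  qed
  finally show ?thesis .
qed

lemma (in prob_space) Gscore_miss_bound: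
  assumes [measurable]: "\<And>t. s t \<in> borel_measurable M"
    and "m \<in> {1..min W t}" "u \<le> sqrt (real m) * (\<delta> - \<kappa>) - hC"
  shows "prob {\<omega>\<in>space M. Gscore W \<kappa> s t \<omega> \<le> hC}
    \<le> prob {\<omega>\<in>space M. sqrt (real m) * (sbar s t m \<omega> - \<delta>) \<le> - u}"
proof (intro finite_measure_mono subsetI; clarsimp)
  fix \<omega> assume "Gscore W \<kappa> s t \<omega> \<le> hC"
  with window_le_Gscore[OF \<open>m \<in> {1..min W t}\<close>]
  have "sqrt (real m) * (sbar s t m \<omega> - \<kappa>) \<le> hC"
    by (rule order_trans)
  with \<open>u \<le> sqrt (real m) * (\<delta> - \<kappa>) - hC\<close>
  show "sqrt (real m) * (sbar s t m \<omega> - \<delta>) \<le> - u"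
    by (simp add: algebra_simps)
qed

lemma le_sqrt_mult_of_sq_div_sq_le:
  fixes x d m :: real
  assumes "x\<^sup>2 / d\<^sup>2 \<le> m" "0 \<le> x" "0 < d"
  shows "x \<le> sqrt m * d"
proof -
  have "x\<^sup>2 \<le> m * d\<^sup>2"
    using assms by (simp add: divide_le_eq)
  then have "sqrt (x\<^sup>2) \<le> sqrt (m * d\<^sup>2)"
    by (rule real_sqrt_le_mono)
  then show ?thesis
    using assms by (simp add: real_sqrt_mult)
qed

lemma exp_neg_half_sq_sqrt_two_ln_inverse:
  fixes \<beta> :: real
  assumes "0 < \<beta>" "\<beta> \<le> 1"
  shows "exp (- (sqrt (2 * ln (1 / \<beta>)))\<^sup>2 / 2) = \<beta>"
  using assms by (simp add: ln_div)

theorem proposition4: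
  fixes M :: "'a measure" and s :: "nat \<Rightarrow> 'a \<Rightarrow> real"
    and W :: nat and \<kappa> hC :: real
  assumes "prob_space M"
    and "\<And>t. s t \<in> borel_measurable M"
    and "W \<ge> 1" and "\<kappa> \<ge> 0" and "hC > 0"
  shows
    "(\<forall>T::nat.
        (\<forall>t\<in>{1..T}. \<forall>m\<in>{1..min W t}. \<forall>a>0.
            measure M {\<omega>\<in>space M. sqrt (real m) * sbar s t m \<omega> > a} \<le> exp (- a\<^sup>2 / 2))
        \<longrightarrow> measure M {\<omega>\<in>space M. \<exists>t\<in>{1..T}. Gscore W \<kappa> s t \<omega> > hC}
              \<le> real T * real W * exp (- hC\<^sup>2 / 2))
     \<and>
     (\<forall>(t::nat) (mstar::nat) (\<delta>::real) (\<beta>::real).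
        1 \<le> mstar \<and> mstar \<le> min W t \<and> \<delta> > \<kappa>
        \<and> (\<forall>u>0. measure M {\<omega>\<in>space M. sqrt (real mstar) * (sbar s t mstar \<omega> - \<delta>) \<le> - u}
                    \<le> exp (- u\<^sup>2 / 2))
        \<and> 0 < \<beta> \<and> \<beta> < 1
        \<and> real mstar \<ge> (hC + sqrt (2 * ln (1 / \<beta>)))\<^sup>2 / (\<delta> - \<kappa>)\<^sup>2
        \<longrightarrow> measure M {\<omega>\<in>space M. Gscore W \<kappa> s t \<omega> \<le> hC} \<le> \<beta>)"
proof -
  interpret prob_space M by fact
  show ?thesis
  proof (intro conjI allI impI)
    fix T :: nat
    assume "\<forall>t\<in>{1..T}. \<forall>m\<in>{1..min W t}. \<forall>a>0.
      prob {\<omega>\<in>space M. sqrt (real m) * sbar s t m \<omega> > a} \<le> exp (- a\<^sup>2 / 2)"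
    with assms show "prob {\<omega>\<in>space M. \<exists>t\<in>{1..T}. Gscore W \<kappa> s t \<omega> > hC}
      \<le> real T * real W * exp (- hC\<^sup>2 / 2)"
      by (intro Gscore_false_alarm_bound) auto
  next
    fix t mstar :: nat and \<delta> \<beta> :: real
    assume H: "1 \<le> mstar \<and> mstar \<le> min W t \<and> \<delta> > \<kappa>
      \<and> (\<forall>u>0. prob {\<omega>\<in>space M. sqrt (real mstar) * (sbar s t mstar \<omega> - \<delta>) \<le> - u}
                  \<le> exp (- u\<^sup>2 / 2))
      \<and> 0 < \<beta> \<and> \<beta> < 1
      \<and> real mstar \<ge> (hC + sqrt (2 * ln (1 / \<beta>)))\<^sup>2 / (\<delta> - \<kappa>)\<^sup>2"
    define L where "L = sqrt (2 * ln (1 / \<beta>))"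
    have "0 < L"
      using H by (simp add: L_def)
    have "hC + L \<le> sqrt (real mstar) * (\<delta> - \<kappa>)"
      using H \<open>0 < L\<close> \<open>hC > 0\<close> unfolding L_def by (intro le_sqrt_mult_of_sq_div_sq_le) auto
    then have "prob {\<omega>\<in>space M. Gscore W \<kappa> s t \<omega> \<le> hC}
      \<le> prob {\<omega>\<in>space M. sqrt (real mstar) * (sbar s t mstar \<omega> - \<delta>) \<le> - L}"
      using H assms(2) by (intro Gscore_miss_bound) auto
    also have "\<dots> \<le> exp (- L\<^sup>2 / 2)"
      using H \<open>0 < L\<close> by blast
    also have "\<dots> = \<beta>"
      using H unfolding L_def by (intro exp_neg_half_sq_sqrt_two_ln_inverse) auto
    finally show "prob {\<omega>\<in>space M. Gscore W \<kappa> s t \<omega> \<le> hC} \<le> \<beta>" .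
  qed
qed

end
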